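(* Let $T>0$, $L_x,L_y>0$, and let $R,P,Q$ be real-valued $C^2$ functions on the wedge $W_T=\{(u,x,y,z): u\ge 0,\ z\ge 0,\ u+z\le T\}$, periodic in $x$ with period $L_x$ and in $y$ with period $L_y$, satisfying $$2R_u = P_x+Q_y+R_z,\qquad P_z=R_x,\qquad Q_z=R_y .$$ Then $$\int_{\Sigma_T}\big(R_x^2+R_y^2+R_z^2+P_x^2+Q_x^2+P_y^2+Q_y^2\big)\,d\Sigma_T \le 2\left(\int_{\Sigma_u}\big(R_x^2+R_y^2+R_z^2\big)\,d\Sigma_u+\int_{\Sigma_z}\big(P_x^2+Q_x^2+P_y^2+Q_y^2\big)\,d\Sigma_z\right).$$
   Context: Coordinates $(u,x,y,z)$ with $u=t-z$, where $(t,x,y,z)$ are Cartesian Minkowski coordinates; subscripts denote partial derivatives. All integrals in $x,y$ are over one period $[0,L_x]\times[0,L_y]$. Surfaces and measures: $\Sigma_u=\{u=0,\ 0\le z\le T\}$ with $d\Sigma_u=dz\,dx\,dy$; $\Sigma_z=\{z=0,\ 0\le u\le T\}$ with $d\Sigma_z=du\,dx\,dy$; $\Sigma_T=\{u+z=T,\ 0\le z\le T\}$, on which an integral $\int_{\Sigma_T}F\,d\Sigma_T$ means $\int_0^T\int\int F(T-z,x,y,z)\,dx\,dy\,dz$. *)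

theory Defs
  imports "HOL-Analysis.Analysis"
begin

type_synonym pt = "real \<times> real \<times> real \<times> real"  (* (u,x,y,z) *)

definition wedge :: "real \<Rightarrow> pt set" where
  "wedge T = {(u,x,y,z). u \<ge> 0 \<and> z \<ge> 0 \<and> u + z \<le> T}"

definition C2_with :: "pt set \<Rightarrow> (pt \<Rightarrow> real) \<Rightarrow> (pt \<Rightarrow> pt \<Rightarrow>\<^sub>L real) \<Rightarrow> bool" where
  "C2_with W f Df \<longleftrightarrow>
     (\<forall>p\<in>W. (f has_derivative blinfun_apply (Df p)) (at p within W)) \<and>
     (\<exists>D2 :: pt \<Rightarrow> pt \<Rightarrow>\<^sub>L (pt \<Rightarrow>\<^sub>L real).
        (\<forall>p\<in>W. (Df has_derivative blinfun_apply (D2 p)) (at p within W)) \<and> continuous_on W D2)"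

definition eu :: pt where "eu = (1,0,0,0)"
definition ex :: pt where "ex = (0,1,0,0)"
definition ey :: pt where "ey = (0,0,1,0)"
definition ez :: pt where "ez = (0,0,0,1)"

definition periodic_xy :: "pt set \<Rightarrow> real \<Rightarrow> real \<Rightarrow> (pt \<Rightarrow> real) \<Rightarrow> bool" where
  "periodic_xy W Lx Ly f \<longleftrightarrow>
     (\<forall>u x y z. (u,x,y,z) \<in> W \<longrightarrow> f (u, x + Lx, y, z) = f (u,x,y,z) \<and> f (u, x, y + Ly, z) = f (u,x,y,z))"

definition per_int :: "real \<Rightarrow> real \<Rightarrow> (real \<Rightarrow> real \<Rightarrow> real) \<Rightarrow> real" where
  "per_int Lx Ly F = integral {0..Lx} (\<lambda>x. integral {0..Ly} (\<lambda>y. F x y))"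

end

theory Submission
  imports Defs
begin

text \<open>
  Write \<open>e\<^sub>R = R\<^sub>x\<^sup>2 + R\<^sub>y\<^sup>2 + R\<^sub>z\<^sup>2\<close> and \<open>e\<^sub>P\<^sub>Q = P\<^sub>x\<^sup>2 + Q\<^sub>x\<^sup>2 + P\<^sub>y\<^sup>2 + Q\<^sub>y\<^sup>2\<close>.
  Differentiating the system and using the symmetry of second derivatives gives the conservation law
  \<open>2 \<partial>\<^sub>u e\<^sub>R + \<partial>\<^sub>z (e\<^sub>P\<^sub>Q - R\<^sub>z\<^sup>2) = \<partial>\<^sub>x X + \<partial>\<^sub>y Y\<close> with explicit quadratic fluxes \<open>X\<close>, \<open>Y\<close>.
  For fixed \<open>x, y\<close>, the divergence theorem on the triangle \<open>u, z \<ge> 0, u + z \<le> T\<close> of the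
  \<open>(u, z)\<close>-plane turns this into: the flux \<open>2 e\<^sub>R + e\<^sub>P\<^sub>Q - R\<^sub>z\<^sup>2\<close> through \<open>\<Sigma>\<^sub>T\<close> equals the
  flux \<open>2 e\<^sub>R\<close> through \<open>\<Sigma>\<^sub>u\<close> plus the flux \<open>e\<^sub>P\<^sub>Q - R\<^sub>z\<^sup>2\<close> through \<open>\<Sigma>\<^sub>z\<close> plus the
  integral of \<open>\<partial>\<^sub>x X + \<partial>\<^sub>y Y\<close> over the triangle. The last term vanishes after integrating over a
  period in \<open>x\<close> and \<open>y\<close>, and the estimate follows from
  \<open>e\<^sub>R + e\<^sub>P\<^sub>Q \<le> 2 e\<^sub>R + e\<^sub>P\<^sub>Q - R\<^sub>z\<^sup>2\<close> and \<open>e\<^sub>P\<^sub>Q - R\<^sub>z\<^sup>2 \<le> 2 e\<^sub>P\<^sub>Q\<close>.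
\<close>

section \<open>Integrals over intervals and rectangles\<close>

lemma integral_eq_diff_of_real_derivative:
  fixes f f' :: "real \<Rightarrow> real"
  assumes "a \<le> b" and "\<And>x. x \<in> {a..b} \<Longrightarrow> (f has_real_derivative f' x) (at x within {a..b})"
  shows "integral {a..b} f' = f b - f a"
  using fundamental_theorem_of_calculus[OF assms(1), of f f'] assms(2)
  by (simp add: has_real_derivative_iff_has_vector_derivative integral_unique)

lemma has_real_derivative_along_line:
  fixes f :: "'a::real_normed_vector \<Rightarrow> real"
  assumes f: "\<And>q. q \<in> S \<Longrightarrow> (f has_derivative Df q) (at q within S)"
    and line: "\<And>t. g t = c + t *\<^sub>R v" and "g ` I \<subseteq> S" and "t \<in> I"
  shows "((\<lambda>t. f (g t)) has_real_derivative Df (g t) v) (at t within I)"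
proof -
  have "(g has_derivative (\<lambda>h. h *\<^sub>R v)) (at t within I)"
    unfolding line[abs_def] by (auto intro!: derivative_eq_intros)
  from has_derivative_in_compose2[OF f assms(3,4) this]
  have "((\<lambda>t. f (g t)) has_derivative (\<lambda>h. Df (g t) (h *\<^sub>R v))) (at t within I)" .
  moreover have "linear (Df (g t))"
    using f assms(3,4) has_derivative_linear by blast
  then have "(\<lambda>h. Df (g t) (h *\<^sub>R v)) = (*) (Df (g t) v)"
    by (auto simp: linear_cmul)
  ultimately show ?thesis
    by (simp add: has_field_derivative_def)
qed

lemmas continuous_on_integral_param = integral_continuous_on_param[of _ a b for a b :: real, unfolded cbox_interval]

lemma integrable_on_slice_snd:
  fixes f :: "real \<Rightarrow> real \<Rightarrow> real"
  assumes "continuous_on ({a..b} \<times> {c..d}) (\<lambda>(x, y). f x y)" and "x \<in> {a..b}"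
  shows "f x integrable_on {c..d}"
  by (rule integrable_continuous_interval,
      rule continuous_on_compose2[OF assms(1)[unfolded case_prod_unfold], of _ "\<lambda>y. (x, y)", simplified])
     (use assms(2) in \<open>auto intro!: continuous_intros\<close>)

lemma integrable_on_integral_snd:
  fixes f :: "real \<Rightarrow> real \<Rightarrow> real"
  assumes "continuous_on ({a..b} \<times> {c..d}) (\<lambda>(x, y). f x y)"
  shows "(\<lambda>x. integral {c..d} (f x)) integrable_on {a..b}"
  by (rule integrable_continuous_interval, rule continuous_on_integral_param) (use assms in simp)

lemma integral_swap_interval:
  fixes f :: "real \<Rightarrow> real \<Rightarrow> real"
  assumes "continuous_on ({a..b} \<times> {c..d}) (\<lambda>(x, y). f x y)"
  shows "integral {a..b} (\<lambda>x. integral {c..d} (f x)) = integral {c..d} (\<lambda>y. integral {a..b} (\<lambda>x. f x y))"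
  using integral_swap_continuous[of a c b d f] assms by (simp add: cbox_Pair_eq)

lemma integral_rectangle_green:
  fixes P Q P' Q' :: "real \<Rightarrow> real \<Rightarrow> real"
  assumes "a \<le> b" "c \<le> d"
    and P: "\<And>s z. s \<in> {a..b} \<Longrightarrow> z \<in> {c..d} \<Longrightarrow> ((\<lambda>s. P s z) has_real_derivative P' s z) (at s within {a..b})"
    and Q: "\<And>s z. s \<in> {a..b} \<Longrightarrow> z \<in> {c..d} \<Longrightarrow> (Q s has_real_derivative Q' s z) (at z within {c..d})"
    and P': "continuous_on ({a..b} \<times> {c..d}) (\<lambda>(s, z). P' s z)"
    and Q': "continuous_on ({a..b} \<times> {c..d}) (\<lambda>(s, z). Q' s z)"
  shows "integral {c..d} (\<lambda>z. P b z - P a z)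
       = integral {a..b} (\<lambda>s. Q s d - Q s c) + integral {a..b} (\<lambda>s. integral {c..d} (\<lambda>z. P' s z - Q' s z))"
proof -
  have PQ': "continuous_on ({a..b} \<times> {c..d}) (\<lambda>(s, z). P' s z - Q' s z)"
    using P' Q' by (auto simp: split_beta intro!: continuous_intros)
  have "integral {c..d} (\<lambda>z. P b z - P a z) = integral {c..d} (\<lambda>z. integral {a..b} (\<lambda>s. P' s z))"
    by (intro integral_cong integral_eq_diff_of_real_derivative[symmetric] \<open>a \<le> b\<close> P) auto
  also have "\<dots> = integral {a..b} (\<lambda>s. integral {c..d} (P' s))"
    by (rule integral_swap_interval[OF P', symmetric])
  also have "\<dots> = integral {a..b} (\<lambda>s. integral {c..d} (Q' s) + integral {c..d} (\<lambda>z. P' s z - Q' s z))"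
    by (intro integral_cong) (simp add: integral_diff integrable_on_slice_snd[OF P'] integrable_on_slice_snd[OF Q'])
  also have "\<dots> = integral {a..b} (\<lambda>s. integral {c..d} (Q' s))
      + integral {a..b} (\<lambda>s. integral {c..d} (\<lambda>z. P' s z - Q' s z))"
    using integrable_on_integral_snd[OF Q'] integrable_on_integral_snd[OF PQ']
    by (intro integral_add) simp_all
  also have "integral {a..b} (\<lambda>s. integral {c..d} (Q' s)) = integral {a..b} (\<lambda>s. Q s d - Q s c)"
    by (intro integral_cong integral_eq_diff_of_real_derivative \<open>c \<le> d\<close> Q) auto
  finally show ?thesis .
qed

lemma per_int_add:
  fixes f g :: "real \<Rightarrow> real \<Rightarrow> real"
  assumes f: "continuous_on ({0..Lx} \<times> {0..Ly}) (\<lambda>(x, y). f x y)"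
    and g: "continuous_on ({0..Lx} \<times> {0..Ly}) (\<lambda>(x, y). g x y)"
  shows "per_int Lx Ly (\<lambda>x y. f x y + g x y) = per_int Lx Ly f + per_int Lx Ly g"
proof -
  have "per_int Lx Ly (\<lambda>x y. f x y + g x y)
      = integral {0..Lx} (\<lambda>x. integral {0..Ly} (f x) + integral {0..Ly} (g x))"
    unfolding per_int_def
    by (intro integral_cong integral_add integrable_on_slice_snd[OF f] integrable_on_slice_snd[OF g])
  also have "\<dots> = per_int Lx Ly f + per_int Lx Ly g"
    unfolding per_int_def
    by (intro integral_add integrable_on_integral_snd[OF f] integrable_on_integral_snd[OF g])
  finally show ?thesis .
qed

lemma per_int_mono:
  fixes f g :: "real \<Rightarrow> real \<Rightarrow> real"
  assumes f: "continuous_on ({0..Lx} \<times> {0..Ly}) (\<lambda>(x, y). f x y)"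
    and g: "continuous_on ({0..Lx} \<times> {0..Ly}) (\<lambda>(x, y). g x y)"
    and le: "\<And>x y. x \<in> {0..Lx} \<Longrightarrow> y \<in> {0..Ly} \<Longrightarrow> f x y \<le> g x y"
  shows "per_int Lx Ly f \<le> per_int Lx Ly g"
  unfolding per_int_def
  by (intro integral_le integrable_on_integral_snd[OF f] integrable_on_integral_snd[OF g]
      integrable_on_slice_snd[OF f] integrable_on_slice_snd[OF g] le)

lemma continuous_on_rectangle_integral:
  fixes f :: "real \<Rightarrow> real \<Rightarrow> real \<Rightarrow> real"
  assumes "continuous_on (({0..Lx} \<times> {0..Ly}) \<times> {a..b}) (\<lambda>((x, y), z). f x y z)"
  shows "continuous_on ({0..Lx} \<times> {0..Ly}) (\<lambda>(x, y). integral {a..b} (f x y))"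
  using continuous_on_integral_param[of "{0..Lx} \<times> {0..Ly}" a b "\<lambda>(x, y). f x y"] assms
  by (simp add: split_beta)

lemma per_int_integral_swap:
  fixes f :: "real \<Rightarrow> real \<Rightarrow> real \<Rightarrow> real"
  assumes f: "continuous_on (({0..Lx} \<times> {0..Ly}) \<times> {a..b}) (\<lambda>((x, y), z). f x y z)"
  shows "per_int Lx Ly (\<lambda>x y. integral {a..b} (f x y)) = integral {a..b} (\<lambda>z. per_int Lx Ly (\<lambda>x y. f x y z))"
proof -
  have slice: "continuous_on ({0..Ly} \<times> {a..b}) (\<lambda>(y, z). f x y z)" if "x \<in> {0..Lx}" for x
  proof -
    have "continuous_on ({0..Ly} \<times> {a..b}) (\<lambda>t. (\<lambda>((x, y), z). f x y z) ((x, fst t), snd t))"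
      by (rule continuous_on_compose2[OF f]) (use that in \<open>auto intro!: continuous_intros\<close>)
    then show ?thesis
      by (simp add: split_beta)
  qed
  have "continuous_on (({0..Lx} \<times> {a..b}) \<times> {0..Ly})
      (\<lambda>t. (\<lambda>((x, y), z). f x y z) ((fst (fst t), snd t), snd (fst t)))"
    by (rule continuous_on_compose2[OF f]) (auto intro!: continuous_intros)
  then have inner: "continuous_on ({0..Lx} \<times> {a..b}) (\<lambda>(x, z). integral {0..Ly} (\<lambda>y. f x y z))"
    using continuous_on_integral_param[of "{0..Lx} \<times> {a..b}" 0 Ly "\<lambda>(x, z) y. f x y z"]
    by (simp add: split_beta)
  have "per_int Lx Ly (\<lambda>x y. integral {a..b} (f x y))
      = integral {0..Lx} (\<lambda>x. integral {a..b} (\<lambda>z. integral {0..Ly} (\<lambda>y. f x y z)))"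
    unfolding per_int_def by (intro integral_cong integral_swap_interval slice)
  also have "\<dots> = integral {a..b} (\<lambda>z. per_int Lx Ly (\<lambda>x y. f x y z))"
    unfolding per_int_def by (rule integral_swap_interval[OF inner])
  finally show ?thesis .
qed

lemma per_int_periodic_divergence:
  fixes a b a' b' :: "real \<Rightarrow> real \<Rightarrow> real"
  assumes "Lx \<ge> 0" "Ly \<ge> 0"
    and a: "\<And>x y. x \<in> {0..Lx} \<Longrightarrow> y \<in> {0..Ly} \<Longrightarrow> ((\<lambda>x. a x y) has_real_derivative a' x y) (at x within {0..Lx})"
    and b: "\<And>x y. x \<in> {0..Lx} \<Longrightarrow> y \<in> {0..Ly} \<Longrightarrow> (b x has_real_derivative b' x y) (at y within {0..Ly})"
    and a_periodic: "\<And>y. y \<in> {0..Ly} \<Longrightarrow> a Lx y = a 0 y"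
    and b_periodic: "\<And>x. x \<in> {0..Lx} \<Longrightarrow> b x Ly = b x 0"
    and a': "continuous_on ({0..Lx} \<times> {0..Ly}) (\<lambda>(x, y). a' x y)"
    and b': "continuous_on ({0..Lx} \<times> {0..Ly}) (\<lambda>(x, y). b' x y)"
  shows "per_int Lx Ly (\<lambda>x y. a' x y + b' x y) = 0"
proof -
  have "per_int Lx Ly a' = integral {0..Ly} (\<lambda>y. integral {0..Lx} (\<lambda>x. a' x y))"
    unfolding per_int_def by (rule integral_swap_interval[OF a'])
  also have "\<dots> = integral {0..Ly} (\<lambda>y. a Lx y - a 0 y)"
    by (intro integral_cong integral_eq_diff_of_real_derivative \<open>Lx \<ge> 0\<close> a)
  also have "\<dots> = integral {0..Ly} (\<lambda>y. 0)"
    using a_periodic by (intro integral_cong) simp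
  also have "\<dots> = 0"
    by simp
  finally have "per_int Lx Ly a' = 0" .
  have "per_int Lx Ly b' = integral {0..Lx} (\<lambda>x. b x Ly - b x 0)"
    unfolding per_int_def by (intro integral_cong integral_eq_diff_of_real_derivative \<open>Ly \<ge> 0\<close> b)
  also have "\<dots> = integral {0..Lx} (\<lambda>x. 0)"
    using b_periodic by (intro integral_cong) simp
  finally have "per_int Lx Ly b' = 0"
    by simp
  with \<open>per_int Lx Ly a' = 0\<close> show ?thesis
    by (simp add: per_int_add[OF a' b'])
qed

section \<open>Symmetry of second derivatives\<close>

lemma square_integral_pos:
  fixes g :: "real \<Rightarrow> real \<Rightarrow> real"
  assumes "h0 > 0" and cont: "continuous_on ({0..h0} \<times> {0..h0}) (\<lambda>(s, t). g s t)" and "g 0 0 > 0"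
  obtains h where "0 < h" "h \<le> h0" "integral {0..h} (\<lambda>s. integral {0..h} (g s)) > 0"
proof -
  have "(0, 0) \<in> {0..h0} \<times> {0..h0::real}"
    using \<open>h0 > 0\<close> by auto
  with cont \<open>g 0 0 > 0\<close> obtain \<delta> where "\<delta> > 0"
    and \<delta>: "\<And>st. st \<in> {0..h0} \<times> {0..h0} \<Longrightarrow> dist st (0, 0) < \<delta> \<Longrightarrow>
             dist ((\<lambda>(s, t). g s t) st) (g 0 0) < g 0 0 / 2"
    unfolding continuous_on_iff by (metis (no_types, lifting) case_prod_conv half_gt_zero)
  define h where "h = min h0 (\<delta> / 3)"
  have h: "0 < h" "h \<le> h0"
    using \<open>h0 > 0\<close> \<open>\<delta> > 0\<close> by (auto simp: h_def)
  have lower: "g s t \<ge> g 0 0 / 2" if "s \<in> {0..h}" "t \<in> {0..h}" for s t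
  proof -
    have "dist (s, t) (0, 0) \<le> dist s 0 + dist t 0"
      unfolding dist_Pair_Pair using sqrt_sum_squares_le_sum_abs[of "dist s 0" "dist t 0"] by simp
    also have "\<dots> < \<delta>"
      using that \<open>\<delta> > 0\<close> by (auto simp: h_def dist_real_def)
    finally have "\<bar>g s t - g 0 0\<bar> < g 0 0 / 2"
      using \<delta>[of "(s, t)"] that h by (simp add: dist_real_def)
    then show ?thesis
      unfolding abs_less_iff by linarith
  qed
  have cont_h: "continuous_on ({0..h} \<times> {0..h}) (\<lambda>(s, t). g s t)"
    by (rule continuous_on_subset[OF cont]) (use h in auto)
  have "0 < integral {0..h} (\<lambda>s. integral {0..h} (\<lambda>t. g 0 0 / 2))"
    using h \<open>g 0 0 > 0\<close> by simp
  also have "\<dots> \<le> integral {0..h} (\<lambda>s. integral {0..h} (g s))"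
    using lower h
    by (intro integral_le integrable_on_integral_snd[OF cont_h] integrable_on_slice_snd[OF cont_h])
       (auto simp: integrable_const_ivl)
  finally show ?thesis
    using h that by blast
qed

lemma square_integrals_vanish_imp_zero:
  fixes g :: "real \<Rightarrow> real \<Rightarrow> real"
  assumes "h0 > 0" and cont: "continuous_on ({0..h0} \<times> {0..h0}) (\<lambda>(s, t). g s t)"
    and vanish: "\<And>h. 0 < h \<Longrightarrow> h \<le> h0 \<Longrightarrow> integral {0..h} (\<lambda>s. integral {0..h} (g s)) = 0"
  shows "g 0 0 = 0"
proof (rule ccontr)
  assume "g 0 0 \<noteq> 0"
  \<comment> \<open>Multiplying by \<open>g 0 0\<close> reduces the claim to a function that is positive at the corner.\<close>
  have "continuous_on ({0..h0} \<times> {0..h0}) (\<lambda>(s, t). g 0 0 * g s t)"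
    using cont by (auto intro!: continuous_intros simp: split_beta)
  moreover have "g 0 0 * g 0 0 > 0"
    using \<open>g 0 0 \<noteq> 0\<close> by (metis not_real_square_gt_zero)
  ultimately obtain h where "0 < h" "h \<le> h0"
    and "integral {0..h} (\<lambda>s. integral {0..h} (\<lambda>t. g 0 0 * g s t)) > 0"
    using square_integral_pos[OF \<open>h0 > 0\<close>, of "\<lambda>s t. g 0 0 * g s t"] by blast
  then show False
    using vanish by simp
qed

lemma second_difference_integral:
  fixes f :: "'a::real_normed_vector \<Rightarrow> real" and Df :: "'a \<Rightarrow> 'a \<Rightarrow>\<^sub>L real"
    and D2 :: "'a \<Rightarrow> 'a \<Rightarrow>\<^sub>L 'a \<Rightarrow>\<^sub>L real"
  assumes f: "\<And>q. q \<in> S \<Longrightarrow> (f has_derivative Df q) (at q within S)"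
    and Df: "\<And>q. q \<in> S \<Longrightarrow> (Df has_derivative D2 q) (at q within S)"
    and square: "\<And>s t. s \<in> {0..h} \<Longrightarrow> t \<in> {0..h} \<Longrightarrow> p + s *\<^sub>R v + t *\<^sub>R w \<in> S"
    and "h \<ge> 0"
  shows "integral {0..h} (\<lambda>t. integral {0..h} (\<lambda>s. D2 (p + s *\<^sub>R v + t *\<^sub>R w) v w))
       = f (p + h *\<^sub>R v + h *\<^sub>R w) - f (p + h *\<^sub>R w) - f (p + h *\<^sub>R v) + f p"
proof -
  have Df_w: "((\<lambda>q. Df q w) has_derivative (\<lambda>u. D2 q u w)) (at q within S)" if "q \<in> S" for q
    using bounded_linear.has_derivative[OF blinfun.bounded_linear_left Df[OF that]] .
  have "integral {0..h} (\<lambda>t. integral {0..h} (\<lambda>s. D2 (p + s *\<^sub>R v + t *\<^sub>R w) v w))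
      = integral {0..h} (\<lambda>t. Df (p + h *\<^sub>R v + t *\<^sub>R w) w - Df (p + 0 *\<^sub>R v + t *\<^sub>R w) w)"
  proof (rule integral_cong)
    fix t assume "t \<in> {0..h}"
    show "integral {0..h} (\<lambda>s. D2 (p + s *\<^sub>R v + t *\<^sub>R w) v w)
        = Df (p + h *\<^sub>R v + t *\<^sub>R w) w - Df (p + 0 *\<^sub>R v + t *\<^sub>R w) w"
      by (rule integral_eq_diff_of_real_derivative[OF \<open>h \<ge> 0\<close>],
          rule has_real_derivative_along_line[OF Df_w, where c = "p + t *\<^sub>R w"])
         (use square \<open>t \<in> {0..h}\<close> in \<open>auto simp: algebra_simps\<close>)
  qed
  also have "\<dots> = (f (p + h *\<^sub>R v + h *\<^sub>R w) - f (p + 0 *\<^sub>R v + h *\<^sub>R w))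
        - (f (p + h *\<^sub>R v + 0 *\<^sub>R w) - f (p + 0 *\<^sub>R v + 0 *\<^sub>R w))"
    by (rule integral_eq_diff_of_real_derivative[OF \<open>h \<ge> 0\<close>], rule DERIV_diff;
        rule has_real_derivative_along_line[OF f])
       (use square square[of 0, simplified] \<open>h \<ge> 0\<close> in \<open>auto simp: image_subset_iff\<close>)
  finally show ?thesis
    by simp
qed

lemma second_difference_integrals_symmetric:
  fixes f :: "'a::real_normed_vector \<Rightarrow> real" and Df :: "'a \<Rightarrow> 'a \<Rightarrow>\<^sub>L real"
    and D2 :: "'a \<Rightarrow> 'a \<Rightarrow>\<^sub>L 'a \<Rightarrow>\<^sub>L real"
  assumes f: "\<And>q. q \<in> S \<Longrightarrow> (f has_derivative Df q) (at q within S)"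
    and Df: "\<And>q. q \<in> S \<Longrightarrow> (Df has_derivative D2 q) (at q within S)"
    and D2: "continuous_on S D2"
    and square: "\<And>s t. s \<in> {0..h} \<Longrightarrow> t \<in> {0..h} \<Longrightarrow> p + s *\<^sub>R v + t *\<^sub>R w \<in> S"
    and "h \<ge> 0"
  shows "integral {0..h} (\<lambda>a. integral {0..h} (\<lambda>b. D2 (p + b *\<^sub>R v + a *\<^sub>R w) w v))
       = integral {0..h} (\<lambda>a. integral {0..h} (\<lambda>b. D2 (p + b *\<^sub>R v + a *\<^sub>R w) v w))"
proof -
  have square': "s \<in> {0..h} \<Longrightarrow> t \<in> {0..h} \<Longrightarrow> p + s *\<^sub>R w + t *\<^sub>R v \<in> S" for s t
    using square[of t s] by (simp add: add_ac)
  have "continuous_on ({0..h} \<times> {0..h}) (\<lambda>(a, b). D2 (p + b *\<^sub>R v + a *\<^sub>R w))"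
    using square by (auto simp: split_beta intro!: continuous_intros continuous_on_compose2[OF D2])
  then have "continuous_on ({0..h} \<times> {0..h}) (\<lambda>(a, b). D2 (p + b *\<^sub>R v + a *\<^sub>R w) w v)"
    by (auto simp: split_beta intro!: continuous_intros)
  then have "integral {0..h} (\<lambda>a. integral {0..h} (\<lambda>b. D2 (p + b *\<^sub>R v + a *\<^sub>R w) w v))
      = integral {0..h} (\<lambda>b. integral {0..h} (\<lambda>a. D2 (p + a *\<^sub>R w + b *\<^sub>R v) w v))"
    using integral_swap_interval by (simp add: add_ac)
  also have "\<dots> = f (p + h *\<^sub>R w + h *\<^sub>R v) - f (p + h *\<^sub>R v) - f (p + h *\<^sub>R w) + f p"
    by (rule second_difference_integral[OF f Df square' \<open>h \<ge> 0\<close>])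
  also have "\<dots> = integral {0..h} (\<lambda>a. integral {0..h} (\<lambda>b. D2 (p + b *\<^sub>R v + a *\<^sub>R w) v w))"
    by (subst second_difference_integral[OF f Df square \<open>h \<ge> 0\<close>]) (auto simp: add_ac)
  finally show ?thesis .
qed

lemma interior_contains_square:
  fixes p v w :: "'a::real_normed_vector"
  assumes "p \<in> interior S"
  obtains h0 where "h0 > 0" "\<And>s t. s \<in> {0..h0} \<Longrightarrow> t \<in> {0..h0} \<Longrightarrow> p + s *\<^sub>R v + t *\<^sub>R w \<in> S"
proof -
  obtain \<epsilon> where "\<epsilon> > 0" and ball: "ball p \<epsilon> \<subseteq> S"
    using assms mem_interior by blast
  define h0 where "h0 = \<epsilon> / (norm v + norm w + 1)"
  have "h0 > 0"
    using \<open>\<epsilon> > 0\<close> by (simp add: h0_def add_nonneg_pos)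
  moreover have "p + s *\<^sub>R v + t *\<^sub>R w \<in> S" if "s \<in> {0..h0}" "t \<in> {0..h0}" for s t
  proof -
    have "norm (s *\<^sub>R v + t *\<^sub>R w) \<le> h0 * norm v + h0 * norm w"
      using that norm_triangle_ineq[of "s *\<^sub>R v" "t *\<^sub>R w"]
        mult_right_mono[of s h0 "norm v"] mult_right_mono[of t h0 "norm w"]
      by auto
    also have "\<dots> < h0 * (norm v + norm w + 1)"
      using \<open>h0 > 0\<close> by (simp add: algebra_simps)
    also have "\<dots> = \<epsilon>"
      unfolding h0_def by (simp add: add_nonneg_pos[of "norm v + norm w" 1, THEN less_imp_neq, symmetric])
    finally have "p + s *\<^sub>R v + t *\<^sub>R w \<in> ball p \<epsilon>"
      by (metis add.assoc add_diff_cancel_left' dist_commute dist_norm mem_ball)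
    then show ?thesis
      using ball by blast
  qed
  ultimately show ?thesis
    using that by blast
qed

lemma second_derivative_symmetric:
  fixes f :: "'a::real_normed_vector \<Rightarrow> real" and Df :: "'a \<Rightarrow> 'a \<Rightarrow>\<^sub>L real"
    and D2 :: "'a \<Rightarrow> 'a \<Rightarrow>\<^sub>L 'a \<Rightarrow>\<^sub>L real"
  assumes f: "\<And>q. q \<in> S \<Longrightarrow> (f has_derivative Df q) (at q within S)"
    and Df: "\<And>q. q \<in> S \<Longrightarrow> (Df has_derivative D2 q) (at q within S)"
    and D2: "continuous_on S D2" and "p \<in> interior S"
  shows "D2 p v w = D2 p w v"
proof -
  obtain h0 where "h0 > 0" and square: "\<And>s t. s \<in> {0..h0} \<Longrightarrow> t \<in> {0..h0} \<Longrightarrow> p + s *\<^sub>R v + t *\<^sub>R w \<in> S"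
    using interior_contains_square[OF \<open>p \<in> interior S\<close>] by blast
  have cont_D2: "continuous_on ({0..h} \<times> {0..h}) (\<lambda>(a, b). D2 (p + b *\<^sub>R v + a *\<^sub>R w))"
    if "h \<le> h0" for h
    using square that by (auto simp: split_beta intro!: continuous_intros continuous_on_compose2[OF D2])
  then have cont: "continuous_on ({0..h} \<times> {0..h}) (\<lambda>(a, b). D2 (p + b *\<^sub>R v + a *\<^sub>R w) x y)"
    if "h \<le> h0" for h x y
    using that by (auto simp: split_beta intro!: continuous_intros)
  define g where "g a b = D2 (p + b *\<^sub>R v + a *\<^sub>R w) v w - D2 (p + b *\<^sub>R v + a *\<^sub>R w) w v" for a b
  have "g 0 0 = 0"
  proof (rule square_integrals_vanish_imp_zero[where g = g, OF \<open>h0 > 0\<close>])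
    show "continuous_on ({0..h0} \<times> {0..h0}) (\<lambda>(a, b). g a b)"
      unfolding g_def using cont_D2[of h0] by (auto simp: split_beta intro!: continuous_intros)
    fix h assume h: "0 < h" "h \<le> h0"
    have "integral {0..h} (\<lambda>a. integral {0..h} (g a))
        = integral {0..h} (\<lambda>a. integral {0..h} (\<lambda>b. D2 (p + b *\<^sub>R v + a *\<^sub>R w) v w)
                                - integral {0..h} (\<lambda>b. D2 (p + b *\<^sub>R v + a *\<^sub>R w) w v))"
      by (rule integral_cong) (simp add: g_def[abs_def] integral_diff integrable_on_slice_snd[OF cont[OF h(2)]])
    also have "\<dots> = 0"
      using second_difference_integrals_symmetric[OF f Df D2, of h p v w] square h
      by (simp add: integral_diff integrable_on_integral_snd[OF cont[OF h(2)]])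
    finally show "integral {0..h} (\<lambda>a. integral {0..h} (g a)) = 0" .
  qed
  then show ?thesis
    by (simp add: g_def)
qed

section \<open>Sets that are the closure of their interior\<close>

text \<open>Derivatives within \<open>S\<close> are unique at interior points of \<open>S\<close>; on a set with
  \<open>closure (interior S) = S\<close>, identities between continuous derivatives therefore extend from the
  interior to the boundary.\<close>

lemma continuous_on_eq_from_interior:
  fixes f g :: "'a::topological_space \<Rightarrow> 'b::real_normed_vector"
  assumes S: "closure (interior S) = S" and "continuous_on S f" "continuous_on S g"
    and eq: "\<And>q. q \<in> interior S \<Longrightarrow> f q = g q" and "p \<in> S"
  shows "f p = g p"
proof -
  have "continuous_on (closure (interior S)) (\<lambda>q. f q - g q)"
    unfolding S using assms(2,3) by (rule continuous_on_diff)
  then have "f p - g p = 0"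
    by (rule continuous_constant_on_closure) (use eq S \<open>p \<in> S\<close> in auto)
  then show ?thesis
    by simp
qed

lemma has_derivative_eq_zero_on_zero_set:
  fixes F :: "'a::real_normed_vector \<Rightarrow> 'b::real_normed_vector" and F' :: "'a \<Rightarrow> 'a \<Rightarrow> 'b"
  assumes S: "closure (interior S) = S"
    and F: "\<And>p. p \<in> S \<Longrightarrow> (F has_derivative F' p) (at p within S)"
    and cont: "continuous_on S (\<lambda>p. F' p v)"
    and zero: "\<And>p. p \<in> S \<Longrightarrow> F p = 0" and "p \<in> S"
  shows "F' p v = 0"
proof -
  have "F' q v = 0" if q: "q \<in> interior S" for q
  proof -
    have "q \<in> S"
      using q interior_subset[of S] by blast
    then have "(F has_derivative F' q) (at q)"
      using F at_within_interior[OF q] by metis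
    moreover have "(F has_derivative (\<lambda>_. 0)) (at q)"
      using has_derivative_transform_within_open[OF has_derivative_const open_interior q, of 0 F]
        zero interior_subset[of S] by auto
    ultimately have "F' q = (\<lambda>_. 0)"
      by (rule has_derivative_unique)
    then show ?thesis
      by simp
  qed
  then show ?thesis
    using continuous_on_eq_from_interior[where g = "\<lambda>_. 0", OF S cont continuous_on_const _ \<open>p \<in> S\<close>]
    by simp
qed

lemma has_derivative_translation_invariant:
  fixes f :: "'a::real_normed_vector \<Rightarrow> 'b::real_normed_vector" and Df :: "'a \<Rightarrow> 'a \<Rightarrow>\<^sub>L 'b"
  assumes S: "closure (interior S) = S" and shift: "(+) c ` S \<subseteq> S"
    and periodic: "\<And>p. p \<in> S \<Longrightarrow> f (c + p) = f p"
    and f: "\<And>p. p \<in> S \<Longrightarrow> (f has_derivative Df p) (at p within S)"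
    and cont: "continuous_on S Df" and "p \<in> S"
  shows "Df (c + p) = Df p"
proof (rule continuous_on_eq_from_interior[OF S _ cont _ \<open>p \<in> S\<close>])
  show "continuous_on S (\<lambda>p. Df (c + p))"
    using shift by (intro continuous_on_compose2[OF cont] continuous_intros) auto
  fix q assume q: "q \<in> interior S"
  have "c + q \<in> (+) c ` interior S"
    using q by blast
  then have "c + q \<in> interior S"
    using interior_mono[OF shift] unfolding interior_translation by blast
  moreover have "c + q \<in> S"
    using calculation interior_subset[of S] by blast
  ultimately have "(f has_derivative Df (c + q)) (at (c + q))"
    using f at_within_interior by metis
  moreover have "((\<lambda>x. c + x) has_derivative (\<lambda>x. x)) (at q)"
    by (auto intro!: derivative_eq_intros)
  ultimately have "((\<lambda>x. f (c + x)) has_derivative Df (c + q)) (at q)"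
    using has_derivative_compose[of "\<lambda>x. c + x" "\<lambda>x. x" q UNIV f] by simp
  then have "(f has_derivative Df (c + q)) (at q)"
    by (rule has_derivative_transform_within_open[OF _ open_interior q])
       (use periodic interior_subset[of S] in blast)
  moreover have "(f has_derivative Df q) (at q)"
    using f[of q] at_within_interior[OF q] q interior_subset[of S] by auto
  ultimately show "Df (c + q) = Df q"
    by (metis blinfun_eqI has_derivative_unique)
qed

section \<open>The wedge\<close>

lemma wedge_halfspaces: "wedge T = {p. 0 \<le> eu \<bullet> p} \<inter> {p. 0 \<le> ez \<bullet> p} \<inter> {p. (eu + ez) \<bullet> p \<le> T}"
  by (auto simp: wedge_def eu_def ez_def)

lemma closure_interior_wedge:
  assumes "T > 0"
  shows "closure (interior (wedge T)) = wedge T"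
proof -
  have "closed (wedge T)" "convex (wedge T)"
    unfolding wedge_halfspaces
    by (intro closed_Int closed_halfspace_ge closed_halfspace_le convex_Int convex_halfspace_ge convex_halfspace_le)+
  moreover have "(T / 3, 0, 0, T / 3) \<in> interior (wedge T)"
  proof (rule interior_maximal[THEN subsetD])
    let ?U = "{p. 0 < eu \<bullet> p} \<inter> {p. 0 < ez \<bullet> p} \<inter> {p. (eu + ez) \<bullet> p < T}"
    show "open ?U"
      by (intro open_Int open_halfspace_gt open_halfspace_lt)
    show "?U \<subseteq> wedge T"
      unfolding wedge_halfspaces by auto
    show "(T / 3, 0, 0, T / 3) \<in> ?U"
      using assms by (simp add: eu_def ez_def)
  qed
  ultimately show ?thesis
    using convex_closure_interior[of "wedge T"] closure_closed by blast
qed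

lemma wedge_translate_xy_subset: "(+) (0, a, b, 0) ` wedge T \<subseteq> wedge T"
  by (auto simp: wedge_def)

locale wedge_C2 =
  fixes T :: real and f :: "pt \<Rightarrow> real" and Df :: "pt \<Rightarrow> pt \<Rightarrow>\<^sub>L real"
    and D2 :: "pt \<Rightarrow> pt \<Rightarrow>\<^sub>L pt \<Rightarrow>\<^sub>L real"
  assumes T_pos: "T > 0"
    and has_derivative_f: "\<And>p. p \<in> wedge T \<Longrightarrow> (f has_derivative Df p) (at p within wedge T)"
    and has_derivative_Df: "\<And>p. p \<in> wedge T \<Longrightarrow> (Df has_derivative D2 p) (at p within wedge T)"
    and continuous_D2: "continuous_on (wedge T) D2"
begin

lemma continuous_Df: "continuous_on (wedge T) Df"
  using has_derivative_continuous_on[OF has_derivative_Df] .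

lemma continuous_on_Df_comp [continuous_intros]:
  "continuous_on S g \<Longrightarrow> g ` S \<subseteq> wedge T \<Longrightarrow> continuous_on S (\<lambda>t. Df (g t))"
  by (rule continuous_on_compose2[OF continuous_Df])

lemma continuous_on_D2_comp [continuous_intros]:
  "continuous_on S g \<Longrightarrow> g ` S \<subseteq> wedge T \<Longrightarrow> continuous_on S (\<lambda>t. D2 (g t))"
  by (rule continuous_on_compose2[OF continuous_D2])

lemma D2_symmetric:
  assumes "p \<in> wedge T"
  shows "D2 p v w = D2 p w v"
  by (rule continuous_on_eq_from_interior[OF closure_interior_wedge[OF T_pos] _ _ _ assms])
     (auto intro!: continuous_intros continuous_D2
        second_derivative_symmetric[OF has_derivative_f has_derivative_Df continuous_D2])

lemma Df_translation_invariant: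
  assumes "\<And>p. p \<in> wedge T \<Longrightarrow> f ((0, a, b, 0) + p) = f p" and "p \<in> wedge T"
  shows "Df ((0, a, b, 0) + p) = Df p"
  by (rule has_derivative_translation_invariant[OF closure_interior_wedge[OF T_pos] wedge_translate_xy_subset assms(1)
        has_derivative_f continuous_Df assms(2)])

lemma Df_periodic:
  assumes "periodic_xy (wedge T) Lx Ly f" and "(u, x, y, z) \<in> wedge T"
  shows "Df (u, x + Lx, y, z) = Df (u, x, y, z)" and "Df (u, x, y + Ly, z) = Df (u, x, y, z)"
  using Df_translation_invariant[of Lx 0 "(u, x, y, z)"] Df_translation_invariant[of 0 Ly "(u, x, y, z)"] assms
  by (auto simp: periodic_xy_def add.commute)

end

lemma C2_with_imp_wedge_C2:
  assumes "T > 0" and "C2_with (wedge T) f Df"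
  obtains D2 where "wedge_C2 T f Df D2"
  using assms unfolding C2_with_def wedge_C2_def by blast

text \<open>The square \<open>(s, z) \<in> [0, T]\<^sup>2\<close> parametrizes the triangle \<open>u, z \<ge> 0, u + z \<le> T\<close>:
  \<open>s\<close> is the value of \<open>u + z\<close> and \<open>z / T\<close> the relative position along the segment
  \<open>u + z = s\<close>. The Jacobian of the map is \<open>s / T\<close>.\<close>

definition wedge_param :: "real \<Rightarrow> real \<Rightarrow> real \<Rightarrow> real \<Rightarrow> real \<Rightarrow> pt" where
  "wedge_param T x y s z = (s * (T - z) / T, x, y, s * z / T)"

lemma wedge_param_in_wedge:
  assumes "T > 0" "s \<in> {0..T}" "z \<in> {0..T}"
  shows "wedge_param T x y s z \<in> wedge T"
proof -
  have "s * (T - z) / T + s * z / T = s * T / T"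
    by (simp add: add_divide_distrib[symmetric] algebra_simps)
  also have "\<dots> = s"
    using \<open>T > 0\<close> by simp
  finally have "s * (T - z) / T + s * z / T = s" .
  then show ?thesis
    using assms by (auto simp: wedge_param_def wedge_def)
qed

lemma continuous_on_wedge_param [continuous_intros]:
  "continuous_on S a \<Longrightarrow> continuous_on S b \<Longrightarrow> continuous_on S c \<Longrightarrow> continuous_on S d \<Longrightarrow>
   continuous_on S (\<lambda>t. wedge_param T (a t) (b t) (c t) (d t))"
  unfolding wedge_param_def divide_inverse by (intro continuous_intros)

lemma wedge_param_boundary:
  assumes "T \<noteq> 0"
  shows "wedge_param T x y T z = (T - z, x, y, z)" "wedge_param T x y 0 z = (0, x, y, 0)"
    and "wedge_param T x y s 0 = (s, x, y, 0)" "wedge_param T x y s T = (0, x, y, s)"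
  using assms by (simp_all add: wedge_param_def)

lemma continuous_on_comp_wedge_param:
  assumes "T > 0" and "continuous_on (wedge T) h"
  shows "continuous_on ({0..T} \<times> {0..T}) (\<lambda>(s, z). h (wedge_param T x y s z))"
proof -
  have "continuous_on ({0..T} \<times> {0..T}) (\<lambda>t. wedge_param T x y (fst t) (snd t))"
    by (intro continuous_intros)
  moreover have "(\<lambda>t. wedge_param T x y (fst t) (snd t)) ` ({0..T} \<times> {0..T}) \<subseteq> wedge T"
    using wedge_param_in_wedge[OF assms(1)] by auto
  ultimately show ?thesis
    using continuous_on_compose2[OF assms(2)] by (simp add: split_beta)
qed

lemma has_real_derivative_wedge_param_s:
  assumes "T > 0" and f: "\<And>p. p \<in> wedge T \<Longrightarrow> (f has_derivative Df p) (at p within wedge T)"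
    and "s \<in> {0..T}" "z \<in> {0..T}"
  shows "((\<lambda>s. f (wedge_param T x y s z)) has_real_derivative
          (T - z) / T * Df (wedge_param T x y s z) eu + z / T * Df (wedge_param T x y s z) ez)
         (at s within {0..T})"
proof -
  let ?p = "wedge_param T x y s z"
  have line: "wedge_param T x y s' z = (0, x, y, 0) + s' *\<^sub>R ((T - z) / T, 0, 0, z / T)" for s'
    by (simp add: wedge_param_def)
  have "(\<lambda>s. wedge_param T x y s z) ` {0..T} \<subseteq> wedge T"
    using wedge_param_in_wedge assms by auto
  from has_real_derivative_along_line[OF f line this \<open>s \<in> {0..T}\<close>]
  have "((\<lambda>s. f (wedge_param T x y s z)) has_real_derivative Df ?p ((T - z) / T, 0, 0, z / T))
        (at s within {0..T})" .
  moreover have lin: "linear (Df ?p)"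
    using f[OF wedge_param_in_wedge] assms has_derivative_linear by blast
  have "((T - z) / T, 0, 0, z / T) = ((T - z) / T) *\<^sub>R eu + (z / T) *\<^sub>R ez"
    by (simp add: eu_def ez_def)
  then have "Df ?p ((T - z) / T, 0, 0, z / T) = (T - z) / T * Df ?p eu + z / T * Df ?p ez"
    by (simp only: linear_add[OF lin] linear_cmul[OF lin] real_scaleR_def)
  ultimately show ?thesis
    by simp
qed

lemma has_real_derivative_wedge_param_z:
  assumes "T > 0" and f: "\<And>p. p \<in> wedge T \<Longrightarrow> (f has_derivative Df p) (at p within wedge T)"
    and "s \<in> {0..T}" "z \<in> {0..T}"
  shows "((\<lambda>z. f (wedge_param T x y s z)) has_real_derivative
          s / T * (Df (wedge_param T x y s z) ez - Df (wedge_param T x y s z) eu))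
         (at z within {0..T})"
proof -
  let ?p = "wedge_param T x y s z"
  have line: "wedge_param T x y s z' = (s, x, y, 0) + z' *\<^sub>R (- s / T, 0, 0, s / T)" for z'
    using assms by (simp add: wedge_param_def field_simps)
  have "(\<lambda>z. wedge_param T x y s z) ` {0..T} \<subseteq> wedge T"
    using wedge_param_in_wedge assms by auto
  from has_real_derivative_along_line[OF f line this \<open>z \<in> {0..T}\<close>]
  have "((\<lambda>z. f (wedge_param T x y s z)) has_real_derivative Df ?p (- s / T, 0, 0, s / T))
        (at z within {0..T})" .
  moreover have lin: "linear (Df ?p)"
    using f[OF wedge_param_in_wedge] assms has_derivative_linear by blast
  have "(- s / T, 0, 0, s / T) = (s / T) *\<^sub>R ez - (s / T) *\<^sub>R eu"
    by (simp add: eu_def ez_def)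
  then have "Df ?p (- s / T, 0, 0, s / T) = s / T * (Df ?p ez - Df ?p eu)"
    by (simp only: linear_diff[OF lin] linear_cmul[OF lin] real_scaleR_def right_diff_distrib)
  ultimately show ?thesis
    by simp
qed

lemma wedge_divergence:
  fixes f g :: "pt \<Rightarrow> real" and Df Dg :: "pt \<Rightarrow> pt \<Rightarrow> real"
  assumes "T > 0"
    and f: "\<And>p. p \<in> wedge T \<Longrightarrow> (f has_derivative Df p) (at p within wedge T)"
    and g: "\<And>p. p \<in> wedge T \<Longrightarrow> (g has_derivative Dg p) (at p within wedge T)"
    and Df: "\<And>v. continuous_on (wedge T) (\<lambda>p. Df p v)"
    and Dg: "\<And>v. continuous_on (wedge T) (\<lambda>p. Dg p v)"
  shows "integral {0..T} (\<lambda>z. f (T - z, x, y, z) + g (T - z, x, y, z))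
       = integral {0..T} (\<lambda>s. f (0, x, y, s) + g (s, x, y, 0))
         + integral {0..T} (\<lambda>s. integral {0..T} (\<lambda>z.
             s / T * (Df (wedge_param T x y s z) eu + Dg (wedge_param T x y s z) ez)))"
proof -
  have "T \<noteq> 0"
    using \<open>T > 0\<close> by simp
  define p where "p s z = wedge_param T x y s z" for s z
  \<comment> \<open>\<open>P\<close> and \<open>Q\<close> are chosen so that \<open>\<partial>\<^sub>s P - \<partial>\<^sub>z Q\<close> is the Jacobian \<open>s / T\<close> times
      \<open>\<partial>\<^sub>u f + \<partial>\<^sub>z g\<close> at \<open>p s z\<close>, while their boundary values are the fluxes through the
      three sides of the triangle.\<close>
  define P where "P s z = s / T * (f (p s z) + g (p s z))" for s z
  define Q where "Q s z = z / T * f (p s z) - (T - z) / T * g (p s z)" for s z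
  define P' where "P' s z = (f (p s z) + g (p s z)) / T
      + s / T * ((T - z) / T * Df (p s z) eu + z / T * Df (p s z) ez
                 + ((T - z) / T * Dg (p s z) eu + z / T * Dg (p s z) ez))" for s z
  define Q' where "Q' s z = (f (p s z) + g (p s z)) / T
      + z / T * (s / T * (Df (p s z) ez - Df (p s z) eu))
      - (T - z) / T * (s / T * (Dg (p s z) ez - Dg (p s z) eu))" for s z
  have P: "((\<lambda>s. P s z) has_real_derivative P' s z) (at s within {0..T})"
    if "s \<in> {0..T}" "z \<in> {0..T}" for s z
    using \<open>T > 0\<close> that unfolding P_def P'_def p_def
    by (auto intro!: derivative_eq_intros has_real_derivative_wedge_param_s[OF \<open>T > 0\<close> f]
        has_real_derivative_wedge_param_s[OF \<open>T > 0\<close> g] simp: field_simps)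
  have Q: "(Q s has_real_derivative Q' s z) (at z within {0..T})"
    if "s \<in> {0..T}" "z \<in> {0..T}" for s z
    using \<open>T > 0\<close> that unfolding Q_def Q'_def p_def
    by (auto intro!: derivative_eq_intros has_real_derivative_wedge_param_z[OF \<open>T > 0\<close> f]
        has_real_derivative_wedge_param_z[OF \<open>T > 0\<close> g] simp: field_simps)
  have "continuous_on (wedge T) f" "continuous_on (wedge T) g"
    using has_derivative_continuous_on f g by blast+
  have "continuous_on ({0..T} \<times> {0..T}) (\<lambda>(s, z). P' s z)"
    and "continuous_on ({0..T} \<times> {0..T}) (\<lambda>(s, z). Q' s z)"
    using continuous_on_comp_wedge_param[OF \<open>T > 0\<close>, of _ x y] Df[of eu] Df[of ez] Dg[of eu] Dg[of ez]
      \<open>continuous_on (wedge T) f\<close> \<open>continuous_on (wedge T) g\<close> \<open>T \<noteq> 0\<close>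
    unfolding P'_def Q'_def p_def by (auto simp: split_beta intro!: continuous_intros)
  from integral_rectangle_green[of 0 T 0 T P P' Q Q', OF _ _ P Q this]
  have "integral {0..T} (\<lambda>z. P T z - P 0 z) = integral {0..T} (\<lambda>s. Q s T - Q s 0)
      + integral {0..T} (\<lambda>s. integral {0..T} (\<lambda>z. P' s z - Q' s z))"
    using \<open>T > 0\<close> by simp
  moreover have "P T z - P 0 z = f (T - z, x, y, z) + g (T - z, x, y, z)" for z
    using \<open>T \<noteq> 0\<close> by (simp add: P_def p_def wedge_param_boundary)
  moreover have "Q s T - Q s 0 = f (0, x, y, s) + g (s, x, y, 0)" for s
    using \<open>T \<noteq> 0\<close> by (simp add: Q_def p_def wedge_param_boundary)
  moreover have "P' s z - Q' s z = s / T * (Df (wedge_param T x y s z) eu + Dg (wedge_param T x y s z) ez)"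
    for s z
    unfolding P'_def Q'_def p_def using \<open>T \<noteq> 0\<close> by (simp add: field_simps)
  ultimately show ?thesis
    by simp
qed

section \<open>The energy estimate\<close>

locale wedge_system =
  R: wedge_C2 T R DR D2R + P: wedge_C2 T P DP D2P + Q: wedge_C2 T Q DQ D2Q
  for T R DR D2R P DP D2P Q DQ D2Q +
  fixes Lx Ly :: real
  assumes Lx_pos: "Lx > 0" and Ly_pos: "Ly > 0"
    and periodic: "periodic_xy (wedge T) Lx Ly R" "periodic_xy (wedge T) Lx Ly P"
      "periodic_xy (wedge T) Lx Ly Q"
    and evolution: "\<forall>p\<in>wedge T. 2 * DR p eu = DP p ex + DQ p ey + DR p ez"
    and constraint_P: "\<forall>p\<in>wedge T. DP p ez = DR p ex"
    and constraint_Q: "\<forall>p\<in>wedge T. DQ p ez = DR p ey"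
begin

lemma D2_evolution:
  assumes "p \<in> wedge T"
  shows "2 * D2R p v eu = D2P p v ex + D2Q p v ey + D2R p v ez"
proof -
  have "2 * D2R p v eu - (D2P p v ex + D2Q p v ey + D2R p v ez) = 0"
  proof (rule has_derivative_eq_zero_on_zero_set[OF closure_interior_wedge[OF R.T_pos] _ _ _ assms,
        where F = "\<lambda>p. 2 * DR p eu - (DP p ex + DQ p ey + DR p ez)"
          and F' = "\<lambda>p v. 2 * D2R p v eu - (D2P p v ex + D2Q p v ey + D2R p v ez)"])
    show "((\<lambda>p. 2 * DR p eu - (DP p ex + DQ p ey + DR p ez)) has_derivative
          (\<lambda>v. 2 * D2R q v eu - (D2P q v ex + D2Q q v ey + D2R q v ez))) (at q within wedge T)"
      if "q \<in> wedge T" for q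
      using that by (auto intro!: derivative_eq_intros R.has_derivative_Df
          P.has_derivative_Df Q.has_derivative_Df)
  qed (use evolution in \<open>auto intro!: continuous_intros R.continuous_D2 P.continuous_D2 Q.continuous_D2\<close>)
  then show ?thesis
    by simp
qed

lemma D2_constraint_P:
  assumes "p \<in> wedge T"
  shows "D2P p v ez = D2R p v ex"
proof -
  have "D2P p v ez - D2R p v ex = 0"
  proof (rule has_derivative_eq_zero_on_zero_set[OF closure_interior_wedge[OF R.T_pos] _ _ _ assms,
        where F = "\<lambda>p. DP p ez - DR p ex" and F' = "\<lambda>p v. D2P p v ez - D2R p v ex"])
    show "((\<lambda>p. DP p ez - DR p ex) has_derivative (\<lambda>v. D2P q v ez - D2R q v ex)) (at q within wedge T)"
      if "q \<in> wedge T" for q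
      using that by (auto intro!: derivative_eq_intros R.has_derivative_Df P.has_derivative_Df)
  qed (use constraint_P in \<open>auto intro!: continuous_intros R.continuous_D2 P.continuous_D2\<close>)
  then show ?thesis
    by simp
qed

lemma D2_constraint_Q:
  assumes "p \<in> wedge T"
  shows "D2Q p v ez = D2R p v ey"
proof -
  have "D2Q p v ez - D2R p v ey = 0"
  proof (rule has_derivative_eq_zero_on_zero_set[OF closure_interior_wedge[OF R.T_pos] _ _ _ assms,
        where F = "\<lambda>p. DQ p ez - DR p ey" and F' = "\<lambda>p v. D2Q p v ez - D2R p v ey"])
    show "((\<lambda>p. DQ p ez - DR p ey) has_derivative (\<lambda>v. D2Q q v ez - D2R q v ey)) (at q within wedge T)"
      if "q \<in> wedge T" for q
      using that by (auto intro!: derivative_eq_intros R.has_derivative_Df Q.has_derivative_Df)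
  qed (use constraint_Q in \<open>auto intro!: continuous_intros R.continuous_D2 Q.continuous_D2\<close>)
  then show ?thesis
    by simp
qed

definition energy_R :: "pt \<Rightarrow> real" where
  "energy_R p = (DR p ex)\<^sup>2 + (DR p ey)\<^sup>2 + (DR p ez)\<^sup>2"

definition energy_PQ :: "pt \<Rightarrow> real" where
  "energy_PQ p = (DP p ex)\<^sup>2 + (DQ p ex)\<^sup>2 + (DP p ey)\<^sup>2 + (DQ p ey)\<^sup>2"

definition flux_x :: "pt \<Rightarrow> real" where
  "flux_x p = 2 * (DR p ez * DR p ex + DR p ex * DP p ex + DR p ey * DP p ey)"

definition flux_y :: "pt \<Rightarrow> real" where
  "flux_y p = 2 * (DR p ez * DR p ey + DR p ex * DQ p ex + DR p ey * DQ p ey)"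

definition flux_z :: "pt \<Rightarrow> real" where
  "flux_z p = energy_PQ p - (DR p ez)\<^sup>2"

definition energy_R' :: "pt \<Rightarrow> pt \<Rightarrow> real" where
  "energy_R' p v = 2 * (DR p ex * D2R p v ex + DR p ey * D2R p v ey + DR p ez * D2R p v ez)"

definition flux_x' :: "pt \<Rightarrow> pt \<Rightarrow> real" where
  "flux_x' p v = 2 * (D2R p v ez * DR p ex + DR p ez * D2R p v ex + D2R p v ex * DP p ex
     + DR p ex * D2P p v ex + D2R p v ey * DP p ey + DR p ey * D2P p v ey)"

definition flux_y' :: "pt \<Rightarrow> pt \<Rightarrow> real" where
  "flux_y' p v = 2 * (D2R p v ez * DR p ey + DR p ez * D2R p v ey + D2R p v ex * DQ p ex
     + DR p ex * D2Q p v ex + D2R p v ey * DQ p ey + DR p ey * D2Q p v ey)"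

definition flux_z' :: "pt \<Rightarrow> pt \<Rightarrow> real" where
  "flux_z' p v = 2 * (DP p ex * D2P p v ex + DQ p ex * D2Q p v ex + DP p ey * D2P p v ey
     + DQ p ey * D2Q p v ey - DR p ez * D2R p v ez)"

lemma has_derivative_energy_R:
  "p \<in> wedge T \<Longrightarrow> (energy_R has_derivative energy_R' p) (at p within wedge T)"
  unfolding energy_R_def[abs_def] energy_R'_def[abs_def]
  by (auto intro!: derivative_eq_intros R.has_derivative_Df simp: algebra_simps)

lemma has_derivative_flux_x:
  "p \<in> wedge T \<Longrightarrow> (flux_x has_derivative flux_x' p) (at p within wedge T)"
  unfolding flux_x_def[abs_def] flux_x'_def[abs_def]
  by (auto intro!: derivative_eq_intros R.has_derivative_Df P.has_derivative_Df simp: algebra_simps)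

lemma has_derivative_flux_y:
  "p \<in> wedge T \<Longrightarrow> (flux_y has_derivative flux_y' p) (at p within wedge T)"
  unfolding flux_y_def[abs_def] flux_y'_def[abs_def]
  by (auto intro!: derivative_eq_intros R.has_derivative_Df Q.has_derivative_Df simp: algebra_simps)

lemma has_derivative_flux_z:
  "p \<in> wedge T \<Longrightarrow> (flux_z has_derivative flux_z' p) (at p within wedge T)"
  unfolding flux_z_def[abs_def] energy_PQ_def flux_z'_def[abs_def]
  by (auto intro!: derivative_eq_intros R.has_derivative_Df P.has_derivative_Df Q.has_derivative_Df
      simp: algebra_simps)

lemma energy_flux_divergence:
  assumes p: "p \<in> wedge T"
  shows "2 * energy_R' p eu + flux_z' p ez = flux_x' p ex + flux_y' p ey"
proof -
  have R_u: "D2R p eu v = (D2P p v ex + D2Q p v ey + D2R p v ez) / 2" for v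
    using D2_evolution[OF p, of v] R.D2_symmetric[OF p, of eu v] by simp
  have P_z: "D2P p ez v = D2R p v ex" for v
    using D2_constraint_P[OF p, of v] P.D2_symmetric[OF p, of ez v] by simp
  have Q_z: "D2Q p ez v = D2R p v ey" for v
    using D2_constraint_Q[OF p, of v] Q.D2_symmetric[OF p, of ez v] by simp
  have sym: "D2R p ey ex = D2R p ex ey" "D2R p ez ex = D2R p ex ez" "D2R p ez ey = D2R p ey ez"
    "D2P p ey ex = D2P p ex ey" "D2Q p ey ex = D2Q p ex ey"
    using R.D2_symmetric[OF p] P.D2_symmetric[OF p] Q.D2_symmetric[OF p] by simp_all
  show ?thesis
    unfolding energy_R'_def flux_z'_def flux_x'_def flux_y'_def R_u P_z Q_z sym
    by (simp add: field_simps)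
qed


lemma continuous_on_densities [continuous_intros]:
  assumes "continuous_on S g" "g ` S \<subseteq> wedge T"
  shows "continuous_on S (\<lambda>t. energy_R (g t))" "continuous_on S (\<lambda>t. energy_PQ (g t))"
    "continuous_on S (\<lambda>t. flux_x (g t))" "continuous_on S (\<lambda>t. flux_y (g t))"
    "continuous_on S (\<lambda>t. flux_z (g t))" "continuous_on S (\<lambda>t. energy_R' (g t) v)"
    "continuous_on S (\<lambda>t. flux_x' (g t) v)" "continuous_on S (\<lambda>t. flux_y' (g t) v)"
    "continuous_on S (\<lambda>t. flux_z' (g t) v)"
  using assms
  unfolding energy_R_def energy_PQ_def flux_x_def flux_y_def flux_z_def energy_R'_def flux_x'_def
    flux_y'_def flux_z'_def
  by (auto intro!: continuous_intros)

definition transverse_divergence :: "real \<Rightarrow> real \<Rightarrow> real \<Rightarrow> real \<Rightarrow> real" where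
  "transverse_divergence x y s z =
     s / T * (flux_x' (wedge_param T x y s z) ex + flux_y' (wedge_param T x y s z) ey)"

lemma continuous_on_transverse_divergence [continuous_intros]:
  assumes "continuous_on S a" "continuous_on S b" "continuous_on S c" "continuous_on S d"
    and "\<And>t. t \<in> S \<Longrightarrow> c t \<in> {0..T} \<and> d t \<in> {0..T}"
  shows "continuous_on S (\<lambda>t. transverse_divergence (a t) (b t) (c t) (d t))"
  unfolding transverse_divergence_def divide_inverse
  using assms wedge_param_in_wedge[OF R.T_pos] by (auto intro!: continuous_intros)

lemma energy_slice_identity:
  "integral {0..T} (\<lambda>z. 2 * energy_R (T - z, x, y, z) + flux_z (T - z, x, y, z))
   = 2 * integral {0..T} (\<lambda>z. energy_R (0, x, y, z)) + integral {0..T} (\<lambda>u. flux_z (u, x, y, 0))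
     + integral {0..T} (\<lambda>s. integral {0..T} (transverse_divergence x y s))"
proof -
  have "integral {0..T} (\<lambda>z. 2 * energy_R (T - z, x, y, z) + flux_z (T - z, x, y, z))
      = integral {0..T} (\<lambda>s. 2 * energy_R (0, x, y, s) + flux_z (s, x, y, 0))
        + integral {0..T} (\<lambda>s. integral {0..T} (\<lambda>z. s / T *
            (2 * energy_R' (wedge_param T x y s z) eu + flux_z' (wedge_param T x y s z) ez)))"
    by (rule wedge_divergence[OF R.T_pos])
       (auto intro!: derivative_eq_intros has_derivative_energy_R has_derivative_flux_z continuous_intros)
  also have "integral {0..T} (\<lambda>s. 2 * energy_R (0, x, y, s) + flux_z (s, x, y, 0))
      = 2 * integral {0..T} (\<lambda>z. energy_R (0, x, y, z)) + integral {0..T} (\<lambda>u. flux_z (u, x, y, 0))"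
    by (subst integral_add)
       (auto intro!: integrable_continuous_interval continuous_intros simp: image_subset_iff wedge_def)
  also have "integral {0..T} (\<lambda>s. integral {0..T} (\<lambda>z. s / T *
      (2 * energy_R' (wedge_param T x y s z) eu + flux_z' (wedge_param T x y s z) ez)))
      = integral {0..T} (\<lambda>s. integral {0..T} (transverse_divergence x y s))"
    unfolding transverse_divergence_def
    using energy_flux_divergence[OF wedge_param_in_wedge[OF R.T_pos]]
    by (intro integral_cong) simp
  finally show ?thesis .
qed

lemma per_int_transverse_divergence:
  assumes s: "s \<in> {0..T}" and z: "z \<in> {0..T}"
  shows "per_int Lx Ly (\<lambda>x y. transverse_divergence x y s z) = 0"
proof -
  let ?p = "\<lambda>x y. wedge_param T x y s z"
  have in_wedge: "?p x y \<in> wedge T" for x y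
    using wedge_param_in_wedge[OF R.T_pos s z] .
  have "per_int Lx Ly (\<lambda>x y. s / T * flux_x' (?p x y) ex + s / T * flux_y' (?p x y) ey) = 0"
  proof (rule per_int_periodic_divergence[where a = "\<lambda>x y. s / T * flux_x (?p x y)"
        and b = "\<lambda>x y. s / T * flux_y (?p x y)"])
    show "((\<lambda>x. s / T * flux_x (?p x y)) has_real_derivative s / T * flux_x' (?p x y) ex) (at x within {0..Lx})"
      if "x \<in> {0..Lx}" for x y
      by (intro DERIV_cmult has_real_derivative_along_line[OF has_derivative_flux_x, where c = "?p 0 y"])
         (use that in_wedge in \<open>auto simp: wedge_param_def ex_def\<close>)
    show "((\<lambda>y. s / T * flux_y (?p x y)) has_real_derivative s / T * flux_y' (?p x y) ey) (at y within {0..Ly})"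
      if "y \<in> {0..Ly}" for x y
      by (intro DERIV_cmult has_real_derivative_along_line[OF has_derivative_flux_y, where c = "?p x 0"])
         (use that in_wedge in \<open>auto simp: wedge_param_def ey_def\<close>)
    show "s / T * flux_x (?p Lx y) = s / T * flux_x (?p 0 y)" for y
      using R.Df_periodic(1)[OF periodic(1) in_wedge[of 0 y, unfolded wedge_param_def]]
        P.Df_periodic(1)[OF periodic(2) in_wedge[of 0 y, unfolded wedge_param_def]]
      by (simp add: flux_x_def wedge_param_def)
    show "s / T * flux_y (?p x Ly) = s / T * flux_y (?p x 0)" for x
      using R.Df_periodic(2)[OF periodic(1) in_wedge[of x 0, unfolded wedge_param_def]]
        Q.Df_periodic(2)[OF periodic(3) in_wedge[of x 0, unfolded wedge_param_def]]
      by (simp add: flux_y_def wedge_param_def)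
  qed (use Lx_pos Ly_pos R.T_pos s z in \<open>auto simp: split_beta in_wedge image_subset_iff intro!: continuous_intros\<close>)
  then show ?thesis
    by (simp add: transverse_divergence_def distrib_left)
qed

lemma continuous_on_integral_transverse_divergence:
  "continuous_on (({0..Lx} \<times> {0..Ly}) \<times> {0..T}) (\<lambda>((x, y), s). integral {0..T} (transverse_divergence x y s))"
proof -
  have "continuous_on (((({0..Lx} \<times> {0..Ly}) \<times> {0..T}) \<times> {0..T}))
      (\<lambda>(((x, y), s), z). transverse_divergence x y s z)"
    by (auto simp: split_beta intro!: continuous_intros)
  then show ?thesis
    using continuous_on_integral_param[of "({0..Lx} \<times> {0..Ly}) \<times> {0..T}" 0 T
        "\<lambda>((x, y), s). transverse_divergence x y s"]
    by (simp add: split_beta)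
qed

lemma per_int_transverse_divergence_integral:
  "per_int Lx Ly (\<lambda>x y. integral {0..T} (\<lambda>s. integral {0..T} (transverse_divergence x y s))) = 0"
proof -
  have "per_int Lx Ly (\<lambda>x y. integral {0..T} (\<lambda>s. integral {0..T} (transverse_divergence x y s)))
      = integral {0..T} (\<lambda>s. per_int Lx Ly (\<lambda>x y. integral {0..T} (transverse_divergence x y s)))"
    by (rule per_int_integral_swap[OF continuous_on_integral_transverse_divergence])
  also have "\<dots> = integral {0..T} (\<lambda>s. integral {0..T} (\<lambda>z. per_int Lx Ly (\<lambda>x y. transverse_divergence x y s z)))"
    by (intro integral_cong per_int_integral_swap) (auto simp: split_beta intro!: continuous_intros)
  also have "\<dots> = integral {0..T} (\<lambda>s. integral {0..T} (\<lambda>z. 0))"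
    by (intro integral_cong per_int_transverse_divergence)
  also have "\<dots> = 0"
    by simp
  finally show ?thesis .
qed


lemma energy_slice_estimate:
  "integral {0..T} (\<lambda>z. energy_R (T - z, x, y, z) + energy_PQ (T - z, x, y, z))
   \<le> 2 * integral {0..T} (\<lambda>z. energy_R (0, x, y, z)) + 2 * integral {0..T} (\<lambda>u. energy_PQ (u, x, y, 0))
     + integral {0..T} (\<lambda>s. integral {0..T} (transverse_divergence x y s))"
proof -
  have on_wedge: "(T - z, x, y, z) \<in> wedge T" "(0, x, y, z) \<in> wedge T" "(z, x, y, 0) \<in> wedge T"
    if "z \<in> {0..T}" for z
    using that by (auto simp: wedge_def)
  have flux_z_le: "flux_z p \<le> 2 * energy_PQ p" for p
    unfolding flux_z_def energy_PQ_def
    by (smt (verit) zero_le_power2)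
  have "integral {0..T} (\<lambda>z. energy_R (T - z, x, y, z) + energy_PQ (T - z, x, y, z))
      \<le> integral {0..T} (\<lambda>z. 2 * energy_R (T - z, x, y, z) + flux_z (T - z, x, y, z))"
    using on_wedge
    by (intro integral_le integrable_continuous_interval)
       (auto simp: energy_R_def flux_z_def image_subset_iff intro!: continuous_intros)
  also have "\<dots> = 2 * integral {0..T} (\<lambda>z. energy_R (0, x, y, z)) + integral {0..T} (\<lambda>u. flux_z (u, x, y, 0))
      + integral {0..T} (\<lambda>s. integral {0..T} (transverse_divergence x y s))"
    by (rule energy_slice_identity)
  also have "integral {0..T} (\<lambda>u. flux_z (u, x, y, 0)) \<le> integral {0..T} (\<lambda>u. 2 * energy_PQ (u, x, y, 0))"
    using on_wedge flux_z_le
    by (intro integral_le integrable_continuous_interval) (auto simp: image_subset_iff intro!: continuous_intros)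
  finally show ?thesis
    by simp
qed

lemma continuous_on_boundary_energies:
  "continuous_on (({0..Lx} \<times> {0..Ly}) \<times> {0..T})
     (\<lambda>((x, y), z). energy_R (T - z, x, y, z) + energy_PQ (T - z, x, y, z))"
  "continuous_on (({0..Lx} \<times> {0..Ly}) \<times> {0..T}) (\<lambda>((x, y), z). energy_R (0, x, y, z))"
  "continuous_on (({0..Lx} \<times> {0..Ly}) \<times> {0..T}) (\<lambda>((x, y), u). energy_PQ (u, x, y, 0))"
  by (auto simp: split_beta image_subset_iff wedge_def intro!: continuous_intros)

lemma per_int_energy_estimate:
  "per_int Lx Ly (\<lambda>x y. integral {0..T} (\<lambda>z. energy_R (T - z, x, y, z) + energy_PQ (T - z, x, y, z)))
   \<le> 2 * per_int Lx Ly (\<lambda>x y. integral {0..T} (\<lambda>z. energy_R (0, x, y, z)))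
     + 2 * per_int Lx Ly (\<lambda>x y. integral {0..T} (\<lambda>u. energy_PQ (u, x, y, 0)))"
proof -
  define E_R where "E_R x y = integral {0..T} (\<lambda>z. energy_R (0, x, y, z))" for x y
  define E_PQ where "E_PQ x y = integral {0..T} (\<lambda>u. energy_PQ (u, x, y, 0))" for x y
  define bulk where "bulk x y = integral {0..T} (\<lambda>s. integral {0..T} (transverse_divergence x y s))" for x y
  note continuous = continuous_on_rectangle_integral[OF continuous_on_boundary_energies(1)]
    continuous_on_rectangle_integral[OF continuous_on_boundary_energies(2), folded E_R_def]
    continuous_on_rectangle_integral[OF continuous_on_boundary_energies(3), folded E_PQ_def]
    continuous_on_rectangle_integral[OF continuous_on_integral_transverse_divergence, folded bulk_def]
  then have continuous_2: "continuous_on ({0..Lx} \<times> {0..Ly}) (\<lambda>(x, y). 2 * E_R x y)"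
    "continuous_on ({0..Lx} \<times> {0..Ly}) (\<lambda>(x, y). 2 * E_PQ x y)"
    by (auto simp: split_beta intro!: continuous_intros)
  have "per_int Lx Ly (\<lambda>x y. integral {0..T} (\<lambda>z. energy_R (T - z, x, y, z) + energy_PQ (T - z, x, y, z)))
      \<le> per_int Lx Ly (\<lambda>x y. 2 * E_R x y + 2 * E_PQ x y + bulk x y)"
    using continuous
    by (intro per_int_mono) (auto simp: E_R_def E_PQ_def bulk_def energy_slice_estimate
        split_beta intro!: continuous_intros)
  also have "\<dots> = per_int Lx Ly (\<lambda>x y. 2 * E_R x y) + per_int Lx Ly (\<lambda>x y. 2 * E_PQ x y)
      + per_int Lx Ly bulk"
    using per_int_add[of Lx Ly "\<lambda>x y. 2 * E_R x y + 2 * E_PQ x y" bulk]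
      per_int_add[OF continuous_2] continuous continuous_2
    by (simp add: split_beta continuous_on_add)
  also have "per_int Lx Ly bulk = 0"
    unfolding bulk_def by (rule per_int_transverse_divergence_integral)
  finally show ?thesis
    by (simp add: per_int_def E_R_def E_PQ_def)
qed

lemma energy_estimate:
  "integral {0..T} (\<lambda>z. per_int Lx Ly (\<lambda>x y. energy_R (T - z, x, y, z) + energy_PQ (T - z, x, y, z)))
   \<le> 2 * (integral {0..T} (\<lambda>z. per_int Lx Ly (\<lambda>x y. energy_R (0, x, y, z)))
        + integral {0..T} (\<lambda>u. per_int Lx Ly (\<lambda>x y. energy_PQ (u, x, y, 0))))"
  using per_int_energy_estimate per_int_integral_swap[OF continuous_on_boundary_energies(1)]
    per_int_integral_swap[OF continuous_on_boundary_energies(2)]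
    per_int_integral_swap[OF continuous_on_boundary_energies(3)]
  by simp

end

theorem mainTheorem2:
  fixes T Lx Ly :: real and R P Q :: "pt \<Rightarrow> real"
    and DR DP DQ :: "pt \<Rightarrow> pt \<Rightarrow>\<^sub>L real"
  assumes "T > 0" "Lx > 0" "Ly > 0"
    and "C2_with (wedge T) R DR" "C2_with (wedge T) P DP" "C2_with (wedge T) Q DQ"
    and "periodic_xy (wedge T) Lx Ly R" "periodic_xy (wedge T) Lx Ly P" "periodic_xy (wedge T) Lx Ly Q"
    and "\<forall>p\<in>wedge T. 2 * DR p eu = DP p ex + DQ p ey + DR p ez"
    and "\<forall>p\<in>wedge T. DP p ez = DR p ex"
    and "\<forall>p\<in>wedge T. DQ p ez = DR p ey"
  shows "integral {0..T} (\<lambda>z. per_int Lx Ly (\<lambda>x y. let p = (T - z, x, y, z) in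
            (DR p ex)\<^sup>2 + (DR p ey)\<^sup>2 + (DR p ez)\<^sup>2 + (DP p ex)\<^sup>2 + (DQ p ex)\<^sup>2
            + (DP p ey)\<^sup>2 + (DQ p ey)\<^sup>2))
    \<le> 2 * (integral {0..T} (\<lambda>z. per_int Lx Ly (\<lambda>x y. let p = (0, x, y, z) in
                (DR p ex)\<^sup>2 + (DR p ey)\<^sup>2 + (DR p ez)\<^sup>2))
           + integral {0..T} (\<lambda>u. per_int Lx Ly (\<lambda>x y. let p = (u, x, y, 0) in
                (DP p ex)\<^sup>2 + (DQ p ex)\<^sup>2 + (DP p ey)\<^sup>2 + (DQ p ey)\<^sup>2)))"
proof -
  obtain D2R where "wedge_C2 T R DR D2R"
    using C2_with_imp_wedge_C2 assms(1,4) .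
  moreover obtain D2P where "wedge_C2 T P DP D2P"
    using C2_with_imp_wedge_C2 assms(1,5) .
  moreover obtain D2Q where "wedge_C2 T Q DQ D2Q"
    using C2_with_imp_wedge_C2 assms(1,6) .
  ultimately interpret wedge_system T R DR D2R P DP D2P Q DQ D2Q Lx Ly
    using assms by (simp add: wedge_system_def wedge_system_axioms_def)
  show ?thesis
    using energy_estimate by (simp add: energy_R_def energy_PQ_def Let_def add.assoc)
qed

end
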